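(* Let $X$ be a real Hilbert space and let $\bar{x},\hat{x}\in X$ be two distinct points. Let $\hat{H}$ be the halfspace $\{\tilde{x}:\langle\bar{x}-\hat{x},\tilde{x}-\hat{x}\rangle\leq0\}$. Suppose that $x\in X$ is such that $\hat{x}$ lies in the halfspace $H:=\{\tilde{x}:\langle\bar{x}-x,\tilde{x}-x\rangle\leq0\}$. Then $\|x-\hat{x}\|\leq\|\bar{x}-\hat{x}\|$ and $d(x,\hat{H})\geq\frac{\|x-\hat{x}\|^{2}}{\|\bar{x}-\hat{x}\|}$.
   Context: $d(y,S)=\inf_{s\in S}\|y-s\|$ denotes the distance from a point $y$ to a set $S$. *)

theory Defs
  imports "HOL-Analysis.Analysis"
begin

end

theory Submission
  imports Defs
begin

text \<open>Expanding the hypothesis \<open>\<langle>xbar - x, xhat - x\<rangle> \<le> 0\<close> around \<open>xhat\<close> gives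
  \<open>\<parallel>x - xhat\<parallel>\<^sup>2 \<le> \<langle>xbar - xhat, x - xhat\<rangle>\<close>. Cauchy-Schwarz bounds the right-hand side by
  \<open>\<parallel>xbar - xhat\<parallel> \<parallel>x - xhat\<parallel>\<close>, giving the norm estimate. Cauchy-Schwarz also shows that every
  point of the halfspace \<open>{y. \<langle>u, y - a\<rangle> \<le> 0}\<close> is at distance at least \<open>\<langle>u, x - a\<rangle> / \<parallel>u\<parallel>\<close>
  from \<open>x\<close>; with \<open>u = xbar - xhat\<close> this gives the distance estimate.\<close>

lemma norm_diff_squared_le_inner_if_obtuse:
  fixes a b x :: "'a::real_inner"
  assumes "inner (b - x) (a - x) \<le> 0"
  shows "(norm (x - a))\<^sup>2 \<le> inner (b - a) (x - a)"
proof -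
  have "inner (b - x) (a - x) = (norm (x - a))\<^sup>2 - inner (b - a) (x - a)"
    by (simp add: inner_diff_left inner_diff_right inner_commute power2_norm_eq_inner)
  with assms show ?thesis by simp
qed

lemma norm_diff_le_if_obtuse:
  fixes a b x :: "'a::real_inner"
  assumes "inner (b - x) (a - x) \<le> 0"
  shows "norm (x - a) \<le> norm (b - a)"
proof -
  have "norm (x - a) * norm (x - a) \<le> inner (b - a) (x - a)"
    using norm_diff_squared_le_inner_if_obtuse[OF assms] by (simp add: power2_eq_square)
  also have "\<dots> \<le> norm (b - a) * norm (x - a)"
    by (rule order_trans[OF abs_ge_self Cauchy_Schwarz_ineq2])
  finally show ?thesis
    by (cases "norm (x - a) = 0") simp_all
qed

lemma inner_div_norm_le_infdist_halfspace:
  fixes u a x :: "'a::real_inner"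
  assumes "u \<noteq> 0"
  shows "inner u (x - a) / norm u \<le> infdist x {y. inner u (y - a) \<le> 0}"
proof -
  let ?H = "{y. inner u (y - a) \<le> 0}"
  have "a \<in> ?H" by simp
  then have nonempty: "?H \<noteq> {}" by blast
  have "inner u (x - a) / norm u \<le> dist x y" if "y \<in> ?H" for y
  proof -
    have "inner u (x - a) \<le> inner u (x - y)"
      using that by (simp add: inner_diff_right)
    also have "\<dots> \<le> norm u * dist x y"
      unfolding dist_norm by (rule order_trans[OF abs_ge_self Cauchy_Schwarz_ineq2])
    finally show ?thesis
      using assms by (simp add: divide_le_eq mult.commute)
  qed
  then show ?thesis
    unfolding infdist_notempty[OF nonempty] by (intro cINF_greatest[OF nonempty])
qed

theorem proposition4p1:
  fixes xbar xhat x :: "'a::{real_inner, complete_space}"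
  assumes "xbar \<noteq> xhat"
    and "xhat \<in> {y. inner (xbar - x) (y - x) \<le> 0}"
  shows "norm (x - xhat) \<le> norm (xbar - xhat) \<and>
         infdist x {y. inner (xbar - xhat) (y - xhat) \<le> 0} \<ge> (norm (x - xhat))\<^sup>2 / norm (xbar - xhat)"
proof
  have obtuse: "inner (xbar - x) (xhat - x) \<le> 0"
    using assms(2) by simp
  then show "norm (x - xhat) \<le> norm (xbar - xhat)"
    by (rule norm_diff_le_if_obtuse)
  have "(norm (x - xhat))\<^sup>2 / norm (xbar - xhat) \<le> inner (xbar - xhat) (x - xhat) / norm (xbar - xhat)"
    using norm_diff_squared_le_inner_if_obtuse[OF obtuse] by (simp add: divide_right_mono)
  also have "\<dots> \<le> infdist x {y. inner (xbar - xhat) (y - xhat) \<le> 0}"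
    using assms(1) by (intro inner_div_norm_le_infdist_halfspace) simp
  finally show "infdist x {y. inner (xbar - xhat) (y - xhat) \<le> 0} \<ge> (norm (x - xhat))\<^sup>2 / norm (xbar - xhat)" .
qed

end
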